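(* For every integer $k\ge 2$, the complete $k$-partite graph $K(2,2,\ldots,2)$ (with $k$ parts, each of size $2$) has Hall number $h(K(2,\ldots,2))=k$.
   Context: All graphs are finite and simple. A list assignment $L$ to a graph $G$ assigns a finite set $L(v)$ to each vertex $v$; a proper $L$-coloring is a map $\psi$ with $\psi(v)\in L(v)$ for all $v$ and $\psi(u)\ne\psi(v)$ for every edge $uv$. For a subgraph $H$ of $G$ and a color $\sigma$, let $H_\sigma$ denote the subgraph of $H$ induced by $\{v\in V(H):\sigma\in L(v)\}$, and let $\alpha$ denote the independence number (with $\alpha$ of the null graph equal to $0$). $G$ and $L$ satisfy Hall's condition if $\sum_{\sigma}\alpha(H_\sigma)\ge |V(H)|$ for every subgraph $H$ of $G$, the sum being over all colors. The Hall number $h(G)$ is the smallest positive integer $k$ such that $G$ has a proper $L$-coloring whenever $G$ and $L$ satisfy Hall's condition and $|L(v)|\ge k$ for every $v\in V(G)$. *)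

theory Defs
  imports Main
begin

text \<open>A finite simple graph is given by a vertex set V and a symmetric irreflexive
edge relation E on V.  Colours are natural numbers (any finite list assignment
can be relabelled into nat).\<close>

definition simple_graph :: "'a set \<Rightarrow> ('a \<Rightarrow> 'a \<Rightarrow> bool) \<Rightarrow> bool" where
  "simple_graph V E \<longleftrightarrow> finite V \<and> (\<forall>u v. E u v \<longrightarrow> u \<in> V \<and> v \<in> V \<and> u \<noteq> v \<and> E v u)"

definition is_subgraph :: "'a set \<Rightarrow> ('a \<Rightarrow> 'a \<Rightarrow> bool) \<Rightarrow> 'a set \<Rightarrow> ('a \<Rightarrow> 'a \<Rightarrow> bool) \<Rightarrow> bool" where
  "is_subgraph W F V E \<longleftrightarrow> W \<subseteq> V \<and> (\<forall>u v. F u v \<longrightarrow> u \<in> W \<and> v \<in> W \<and> E u v \<and> F v u)"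

definition independent_set :: "'a set \<Rightarrow> ('a \<Rightarrow> 'a \<Rightarrow> bool) \<Rightarrow> 'a set \<Rightarrow> bool" where
  "independent_set W F S \<longleftrightarrow> S \<subseteq> W \<and> (\<forall>u\<in>S. \<forall>v\<in>S. \<not> F u v)"

text \<open>Independence number of the graph (W,F); for the null graph it is 0.\<close>
definition indep_number :: "'a set \<Rightarrow> ('a \<Rightarrow> 'a \<Rightarrow> bool) \<Rightarrow> nat" where
  "indep_number W F = Max (card ` {S. independent_set W F S})"

text \<open>Colours not in any list
  of a vertex of H contribute \<alpha>(null graph) = 0, so the sum is taken over the colours
  occurring in the lists of vertices of H.\<close>
definition hall_condition :: "'a set \<Rightarrow> ('a \<Rightarrow> 'a \<Rightarrow> bool) \<Rightarrow> ('a \<Rightarrow> nat set) \<Rightarrow> bool" where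
  "hall_condition V E L \<longleftrightarrow>
     (\<forall>W F. is_subgraph W F V E \<longrightarrow>
        card W \<le> (\<Sum>\<sigma>\<in>(\<Union>v\<in>W. L v). indep_number {v\<in>W. \<sigma> \<in> L v} F))"

definition proper_L_coloring :: "'a set \<Rightarrow> ('a \<Rightarrow> 'a \<Rightarrow> bool) \<Rightarrow> ('a \<Rightarrow> nat set) \<Rightarrow> ('a \<Rightarrow> nat) \<Rightarrow> bool" where
  "proper_L_coloring V E L \<psi> \<longleftrightarrow> (\<forall>v\<in>V. \<psi> v \<in> L v) \<and> (\<forall>u v. E u v \<longrightarrow> \<psi> u \<noteq> \<psi> v)"

definition hall_good :: "'a set \<Rightarrow> ('a \<Rightarrow> 'a \<Rightarrow> bool) \<Rightarrow> nat \<Rightarrow> bool" where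
  "hall_good V E k \<longleftrightarrow>
     (\<forall>L. (\<forall>v\<in>V. finite (L v)) \<longrightarrow> hall_condition V E L \<longrightarrow> (\<forall>v\<in>V. k \<le> card (L v))
          \<longrightarrow> (\<exists>\<psi>. proper_L_coloring V E L \<psi>))"

definition hall_number :: "'a set \<Rightarrow> ('a \<Rightarrow> 'a \<Rightarrow> bool) \<Rightarrow> nat" where
  "hall_number V E = (LEAST k. 0 < k \<and> hall_good V E k)"

definition K2_verts :: "nat \<Rightarrow> (nat \<times> nat) set" where
  "K2_verts k = {0..<k} \<times> {0, 1}"

definition K2_edges :: "nat \<Rightarrow> (nat \<times> nat) \<Rightarrow> (nat \<times> nat) \<Rightarrow> bool" where
  "K2_edges k x y \<longleftrightarrow> x \<in> K2_verts k \<and> y \<in> K2_verts k \<and> fst x \<noteq> fst y"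

end

theory Submission
  imports Defs
begin

text \<open>Upper bound: K(2,...,2) with k parts is even k-choosable.  If the two lists of some part share a colour, give it to both vertices and recurse on
the other parts; otherwise the two lists of every part are disjoint, and the marriage theorem
gives the 2k vertices pairwise distinct colours from their lists.

Lower bound: the assignment \<open>critical_lists k\<close> has lists of size at least k - 1 and no proper
colouring, but every vertex-deleted subgraph is colourable.  The colour classes of these
colourings are independent sets witnessing Hall's condition for every subgraph missing a
vertex; for subgraphs on all 2k vertices, one independent set per colour, inside a single part,
gives total size 2k.\<close>

section \<open>Hall's marriage theorem\<close>

definition marriage_condition :: "'i set \<Rightarrow> ('i \<Rightarrow> 'c set) \<Rightarrow> bool" where
  "marriage_condition I A \<longleftrightarrow> (\<forall>J\<subseteq>I. card J \<le> card (\<Union>(A ` J)))"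

lemma marriage_condition_remove_element:
  assumes surplus: "\<And>J. J \<subseteq> I \<Longrightarrow> J \<noteq> {} \<Longrightarrow> J \<noteq> I \<Longrightarrow> card J < card (\<Union>(A ` J))"
    and i0: "i0 \<in> I"
  shows "marriage_condition (I - {i0}) (\<lambda>i. A i - {x})"
  unfolding marriage_condition_def
proof (intro allI impI)
  fix J assume J: "J \<subseteq> I - {i0}"
  show "card J \<le> card (\<Union>i\<in>J. A i - {x})"
  proof (cases "J = {}")
    case False
    with J i0 have "card J < card (\<Union>(A ` J))"
      by (intro surplus) auto
    moreover have "card (\<Union>(A ` J)) - 1 \<le> card (\<Union>(A ` J) - {x})"
      by (simp add: card_Diff_singleton_if)
    moreover have "(\<Union>i\<in>J. A i - {x}) = \<Union>(A ` J) - {x}" by auto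
    ultimately show ?thesis by simp
  qed simp
qed

lemma marriage_condition_remove_tight:
  assumes fin: "finite I" and finA: "\<And>i. i \<in> I \<Longrightarrow> finite (A i)"
    and hall: "marriage_condition I A"
    and J: "J \<subseteq> I" and tight: "card (\<Union>(A ` J)) = card J"
  shows "marriage_condition (I - J) (\<lambda>i. A i - \<Union>(A ` J))"
  unfolding marriage_condition_def
proof (intro allI impI)
  fix K assume K: "K \<subseteq> I - J"
  have finJ: "finite J" and finK: "finite K"
    using J K fin by (auto intro: finite_subset)
  have "finite (\<Union>(A ` J))" using finJ J finA by auto
  then have "card (\<Union>i\<in>K. A i - \<Union>(A ` J)) = card (\<Union>(A ` (K \<union> J))) - card (\<Union>(A ` J))"
    by (subst card_Diff_subset[symmetric]) (auto intro: arg_cong[where f = card])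
  moreover have "card (K \<union> J) \<le> card (\<Union>(A ` (K \<union> J)))"
    using hall K J unfolding marriage_condition_def by (meson Diff_subset le_sup_iff order_trans)
  moreover have "card (K \<union> J) = card K + card J"
    using K finK finJ by (subst card_Un_disjoint) auto
  ultimately show "card K \<le> card (\<Union>i\<in>K. A i - \<Union>(A ` J))"
    using tight by simp
qed

lemma distinct_representatives_combine:
  assumes J: "J \<subseteq> I" and g: "inj_on g J" "\<forall>i\<in>J. g i \<in> A i"
    and h: "\<exists>h. inj_on h (I - J) \<and> (\<forall>i\<in>I - J. h i \<in> A i - \<Union>(A ` J))"
  shows "\<exists>f. inj_on f I \<and> (\<forall>i\<in>I. f i \<in> A i)"
proof -
  from h obtain h where h: "inj_on h (I - J)" "\<forall>i\<in>I - J. h i \<in> A i - \<Union>(A ` J)" by blast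
  define f where "f i = (if i \<in> J then g i else h i)" for i
  have "inj_on f J" using g(1) by (simp add: f_def inj_on_def)
  moreover have "inj_on f (I - J)" using h(1) by (simp add: f_def inj_on_def)
  moreover have "f ` J \<inter> f ` (I - J) = {}" using g(2) h(2) by (auto simp: f_def)
  moreover have "J - (I - J) = J" "(I - J) - J = I - J" by auto
  ultimately have "inj_on f (J \<union> (I - J))" unfolding inj_on_Un by simp
  moreover have "J \<union> (I - J) = I" using J by auto
  moreover have "\<forall>i\<in>I. f i \<in> A i" using g h by (auto simp: f_def)
  ultimately show ?thesis by metis
qed

theorem marriage_theorem:
  assumes "finite I" and "\<And>i. i \<in> I \<Longrightarrow> finite (A i)" and "marriage_condition I A"
  shows "\<exists>f. inj_on f I \<and> (\<forall>i\<in>I. f i \<in> A i)"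
  using assms
proof (induction "card I" arbitrary: I A rule: less_induct)
  case less
  note fin = less.prems(1) and finA = less.prems(2) and hall = less.prems(3)
  show ?case
  proof (cases "\<exists>J\<subseteq>I. J \<noteq> {} \<and> J \<noteq> I \<and> card (\<Union>(A ` J)) \<le> card J")
    case no_tight: False
    show ?thesis
    proof (cases "I = {}")
      case False
      then obtain i0 where i0: "i0 \<in> I" by auto
      have "card {i0} \<le> card (\<Union>(A ` {i0}))"
        using hall i0 unfolding marriage_condition_def by blast
      then obtain x where x: "x \<in> A i0" by fastforce
      have "card (I - {i0}) < card I" using fin i0 by (rule card_Diff1_less)
      moreover have "marriage_condition (I - {i0}) (\<lambda>i. A i - {x})"
        using no_tight by (intro marriage_condition_remove_element i0) (auto simp: not_le)
      ultimately obtain f where f: "inj_on f (I - {i0})" "\<forall>i\<in>I - {i0}. f i \<in> A i - {x}"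
        using less.hyps[of "I - {i0}" "\<lambda>i. A i - {x}"] fin finA by auto
      have "inj_on (f(i0 := x)) I"
        using f i0 by (auto simp: inj_on_def)
      moreover have "\<forall>i\<in>I. (f(i0 := x)) i \<in> A i" using f x by auto
      ultimately show ?thesis by blast
    qed simp
  next
    case True
    then obtain J where J: "J \<subseteq> I" "J \<noteq> {}" "J \<noteq> I" "card (\<Union>(A ` J)) \<le> card J"
      by auto
    have finJ: "finite J" using J fin finite_subset by auto
    have tight: "card (\<Union>(A ` J)) = card J"
      using J hall unfolding marriage_condition_def by (simp add: le_antisym)
    have "card J < card I" using J fin by (simp add: psubset_card_mono psubsetI)
    moreover have "marriage_condition J A"
      using hall J unfolding marriage_condition_def by auto
    ultimately obtain g where g: "inj_on g J" "\<forall>i\<in>J. g i \<in> A i"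
      using less.hyps[of J A] finJ finA J by auto
    have "card (I - J) < card I"
      using J fin by (intro psubset_card_mono) auto
    moreover have "marriage_condition (I - J) (\<lambda>i. A i - \<Union>(A ` J))"
      by (intro marriage_condition_remove_tight fin finA hall J tight)
    ultimately have "\<exists>h. inj_on h (I - J) \<and> (\<forall>i\<in>I - J. h i \<in> A i - \<Union>(A ` J))"
      using less.hyps[of "I - J" "\<lambda>i. A i - \<Union>(A ` J)"] fin finA by auto
    then show ?thesis by (rule distinct_representatives_combine[OF J(1) g])
  qed
qed

section \<open>Choosability of the cocktail party graph\<close>

definition cocktail_edges :: "'p set \<Rightarrow> 'p \<times> nat \<Rightarrow> 'p \<times> nat \<Rightarrow> bool" where
  "cocktail_edges P x y \<longleftrightarrow> x \<in> P \<times> {0, 1} \<and> y \<in> P \<times> {0, 1} \<and> fst x \<noteq> fst y"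

lemma K2_edges_eq_cocktail_edges: "K2_edges k = cocktail_edges {0..<k}"
  by (intro ext) (simp add: K2_edges_def K2_verts_def cocktail_edges_def)

lemma cocktail_lists_marriage_condition:
  fixes L :: "'p \<times> nat \<Rightarrow> 'c set"
  assumes finP: "finite P"
    and lists: "\<And>v. v \<in> P \<times> {0, 1} \<Longrightarrow> finite (L v) \<and> card P \<le> card (L v)"
    and disjoint: "\<And>i. i \<in> P \<Longrightarrow> L (i, 0) \<inter> L (i, 1) = {}"
  shows "marriage_condition (P \<times> {0, 1}) L"
  unfolding marriage_condition_def
proof (intro allI impI)
  fix J :: "('p \<times> nat) set" assume J: "J \<subseteq> P \<times> {0, 1}"
  have finI: "finite (P \<times> {0::nat, 1})" using finP by simp
  have "finite J" using J finI by (rule finite_subset)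
  then have finU: "finite (\<Union>(L ` J))"
    using J lists by blast
  show "card J \<le> card (\<Union>(L ` J))"
  proof (cases "\<exists>i. (i, 0) \<in> J \<and> (i, 1) \<in> J")
    case True
    then obtain i where i: "(i, 0) \<in> J" "(i, 1) \<in> J" by auto
    with J have iP: "i \<in> P" by auto
    have "card J \<le> 2 * card P"
      using card_mono[OF finI J] finP by (simp add: card_cartesian_product)
    also have "\<dots> \<le> card (L (i, 0)) + card (L (i, 1))"
      using lists[of "(i, 0)"] lists[of "(i, 1)"] iP by simp
    also have "\<dots> = card (L (i, 0) \<union> L (i, 1))"
      using disjoint lists iP by (simp add: card_Un_disjoint)
    also have "\<dots> \<le> card (\<Union>(L ` J))"
      using i finU by (intro card_mono) auto
    finally show ?thesis .
  next
    case False
    show ?thesis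
    proof (cases "J = {}")
      case False
      then obtain j where j: "j \<in> J" by auto
      have "inj_on fst J"
      proof (rule inj_onI)
        fix a b assume "a \<in> J" "b \<in> J" "fst a = fst b"
        with J \<open>\<not> (\<exists>i. _)\<close> show "a = b" by (cases a; cases b) auto
      qed
      then have "card J = card (fst ` J)" by (simp add: card_image)
      also have "\<dots> \<le> card P" using J finP by (intro card_mono) auto
      also have "\<dots> \<le> card (L j)" using lists J j by auto
      also have "\<dots> \<le> card (\<Union>(L ` J))" using j finU by (intro card_mono) auto
      finally show ?thesis .
    qed simp
  qed
qed

theorem cocktail_party_choosable:
  fixes L :: "'p \<times> nat \<Rightarrow> nat set"
  assumes "finite P"
    and "\<And>v. v \<in> P \<times> {0, 1} \<Longrightarrow> finite (L v) \<and> card P \<le> card (L v)"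
  shows "\<exists>\<psi>. proper_L_coloring (P \<times> {0, 1}) (cocktail_edges P) L \<psi>"
  using assms
proof (induction "card P" arbitrary: P L rule: less_induct)
  case less
  note finP = less.prems(1) and lists = less.prems(2)
  show ?case
  proof (cases "\<exists>i\<in>P. L (i, 0) \<inter> L (i, 1) \<noteq> {}")
    case True
    then obtain i c where i: "i \<in> P" and c: "c \<in> L (i, 0)" "c \<in> L (i, 1)" by auto
    have "\<exists>\<psi>. proper_L_coloring ((P - {i}) \<times> {0, 1}) (cocktail_edges (P - {i})) (\<lambda>v. L v - {c}) \<psi>"
    proof (rule less.hyps)
      show "card (P - {i}) < card P" using finP i by (rule card_Diff1_less)
      show "finite (L v - {c}) \<and> card (P - {i}) \<le> card (L v - {c})"
        if "v \<in> (P - {i}) \<times> {0, 1}" for v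
        using lists[of v] that finP i by (auto simp: card_Diff_singleton_if)
    qed (use finP in simp)
    then obtain \<psi> where \<psi>: "proper_L_coloring ((P - {i}) \<times> {0, 1}) (cocktail_edges (P - {i})) (\<lambda>v. L v - {c}) \<psi>"
      by blast
    define \<phi> where "\<phi> v = (if fst v = i then c else \<psi> v)" for v
    have "\<phi> v \<in> L v" if "v \<in> P \<times> {0, 1}" for v
      using that c \<psi> unfolding \<phi>_def proper_L_coloring_def by auto
    moreover have "\<phi> u \<noteq> \<phi> w" if "cocktail_edges P u w" for u w
      using that \<psi> unfolding \<phi>_def proper_L_coloring_def cocktail_edges_def by auto
    ultimately have "proper_L_coloring (P \<times> {0, 1}) (cocktail_edges P) L \<phi>"
      unfolding proper_L_coloring_def by blast
    then show ?thesis by blast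
  next
    case False
    have "marriage_condition (P \<times> {0, 1}) L"
      using False by (intro cocktail_lists_marriage_condition finP lists) auto
    then obtain f where f: "inj_on f (P \<times> {0, 1})" "\<forall>v\<in>P \<times> {0, 1}. f v \<in> L v"
      using marriage_theorem[of "P \<times> {0, 1}" L] finP lists by auto
    have "proper_L_coloring (P \<times> {0, 1}) (cocktail_edges P) L f"
      using f unfolding proper_L_coloring_def cocktail_edges_def by (auto dest: inj_onD)
    then show ?thesis by blast
  qed
qed

section \<open>Hall's condition from vertex-critical colourings\<close>

lemma card_le_indep_number:
  assumes "finite W" and "independent_set W F S"
  shows "card S \<le> indep_number W F"
proof -
  have "{S. independent_set W F S} \<subseteq> Pow W" unfolding independent_set_def by auto
  then have "finite {S. independent_set W F S}" using assms(1) finite_subset by blast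
  then show ?thesis unfolding indep_number_def using assms(2) by (intro Max_ge) auto
qed

lemma card_le_hall_sum_if_colourable:
  assumes sub: "is_subgraph W F V E" and finV: "finite V" and finL: "\<And>v. v \<in> W \<Longrightarrow> finite (L v)"
    and col: "proper_L_coloring W F L \<psi>"
  shows "card W \<le> (\<Sum>\<sigma>\<in>(\<Union>v\<in>W. L v). indep_number {v\<in>W. \<sigma> \<in> L v} F)"
proof -
  have finW: "finite W" using sub finV unfolding is_subgraph_def by (auto intro: finite_subset)
  define S where "S = (\<Union>v\<in>W. L v)"
  have finS: "finite S" using finW finL unfolding S_def by blast
  have img: "\<psi> ` W \<subseteq> S" using col unfolding proper_L_coloring_def S_def by blast
  have "card W = (\<Sum>\<sigma>\<in>S. card {w\<in>W. \<psi> w = \<sigma>})"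
    using sum.group[OF finW finS img, of "\<lambda>_. 1::nat"] by simp
  also have "\<dots> \<le> (\<Sum>\<sigma>\<in>S. indep_number {v\<in>W. \<sigma> \<in> L v} F)"
  proof (rule sum_mono)
    fix \<sigma>
    have "independent_set {v\<in>W. \<sigma> \<in> L v} F {w\<in>W. \<psi> w = \<sigma>}"
      using col unfolding independent_set_def proper_L_coloring_def by blast
    then show "card {w\<in>W. \<psi> w = \<sigma>} \<le> indep_number {v\<in>W. \<sigma> \<in> L v} F"
      using finW by (intro card_le_indep_number) auto
  qed
  finally show ?thesis unfolding S_def .
qed

lemma hall_condition_if_vertex_critical:
  assumes finV: "finite V" and finL: "\<And>v. v \<in> V \<Longrightarrow> finite (L v)"
    and critical: "\<And>x. x \<in> V \<Longrightarrow> \<exists>\<psi>. proper_L_coloring (V - {x}) (\<lambda>u w. E u w \<and> u \<noteq> x \<and> w \<noteq> x) L \<psi>"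
    and whole: "\<And>F. is_subgraph V F V E \<Longrightarrow>
                  card V \<le> (\<Sum>\<sigma>\<in>(\<Union>v\<in>V. L v). indep_number {v\<in>V. \<sigma> \<in> L v} F)"
  shows "hall_condition V E L"
  unfolding hall_condition_def
proof (intro allI impI)
  fix W F assume sub: "is_subgraph W F V E"
  show "card W \<le> (\<Sum>\<sigma>\<in>(\<Union>v\<in>W. L v). indep_number {v\<in>W. \<sigma> \<in> L v} F)"
  proof (cases "W = V")
    case False
    with sub obtain x where x: "x \<in> V" "x \<notin> W" unfolding is_subgraph_def by auto
    with critical obtain \<psi> where \<psi>: "proper_L_coloring (V - {x}) (\<lambda>u w. E u w \<and> u \<noteq> x \<and> w \<noteq> x) L \<psi>"
      by blast
    have "proper_L_coloring W F L \<psi>"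
      using \<psi> sub x unfolding proper_L_coloring_def is_subgraph_def by blast
    moreover have "\<And>v. v \<in> W \<Longrightarrow> finite (L v)"
      using sub finL unfolding is_subgraph_def by blast
    ultimately show ?thesis
      using sub finV by (intro card_le_hall_sum_if_colourable)
  qed (use sub whole in simp)
qed

section \<open>A critical list assignment\<close>

text \<open>In a proper colouring the k - 1 vertices (i, 0), i < k - 1, use up the colours 0, ..., k - 2,
so the last part is forced to the colours k - 1 and k; then the vertex (j, 1) whose partner has
colour k - 2 has no colour left.\<close>

definition critical_lists :: "nat \<Rightarrow> nat \<times> nat \<Rightarrow> nat set" where
  "critical_lists k v =
     (if fst v < k - 1 then (if snd v = 0 then {..k - 2} else {..k} - {k - 2})
      else (if snd v = 0 then {..k - 1} else {..k} - {k - 1}))"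

lemma critical_lists_card:
  assumes "2 \<le> k"
  shows "finite (critical_lists k v)" and "k - 1 \<le> card (critical_lists k v)"
  using assms by (auto simp: critical_lists_def card_Diff_singleton)

lemma critical_lists_not_colourable:
  assumes k: "2 \<le> k"
  shows "\<not> proper_L_coloring (K2_verts k) (K2_edges k) (critical_lists k) \<psi>"
proof
  assume "proper_L_coloring (K2_verts k) (K2_edges k) (critical_lists k) \<psi>"
  then have mem: "\<And>v. v \<in> K2_verts k \<Longrightarrow> \<psi> v \<in> critical_lists k v"
    and edge: "\<And>u v. u \<in> K2_verts k \<Longrightarrow> v \<in> K2_verts k \<Longrightarrow> fst u \<noteq> fst v \<Longrightarrow> \<psi> u \<noteq> \<psi> v"
    unfolding proper_L_coloring_def K2_edges_def by auto
  define P where "P = {0..<k - 1}"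
  have inP: "(i, 0) \<in> K2_verts k" "(i, 1) \<in> K2_verts k" if "i \<in> P" for i
    using that unfolding P_def K2_verts_def by auto
  have "inj_on (\<lambda>i. \<psi> (i, 0)) P"
  proof (rule inj_onI)
    fix i i' assume "i \<in> P" "i' \<in> P" "\<psi> (i, 0) = \<psi> (i', 0)"
    with edge[of "(i, 0)" "(i', 0)"] inP show "i = i'" by auto
  qed
  moreover have "(\<lambda>i. \<psi> (i, 0)) ` P \<subseteq> {..k - 2}"
  proof
    fix c assume "c \<in> (\<lambda>i. \<psi> (i, 0)) ` P"
    then obtain i where "i \<in> P" "c = \<psi> (i, 0)" by blast
    with mem[OF inP(1)] show "c \<in> {..k - 2}" by (simp add: critical_lists_def P_def)
  qed
  moreover have "card P = card {..k - 2}" using k unfolding P_def by simp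
  ultimately have low_colours: "(\<lambda>i. \<psi> (i, 0)) ` P = {..k - 2}"
    by (simp add: card_image card_subset_eq)
  have low_part: "\<exists>i\<in>P. fst v = i \<and> \<psi> v = \<psi> (i, 0)" if v: "v \<in> K2_verts k" "\<psi> v \<le> k - 2" for v
  proof -
    from v low_colours have "\<psi> v \<in> (\<lambda>i. \<psi> (i, 0)) ` P" by simp
    then obtain i where i: "i \<in> P" "\<psi> v = \<psi> (i, 0)" by blast
    with edge[OF v(1) inP(1)[OF i(1)]] show ?thesis by auto
  qed
  have last: "(k - 1, 0) \<in> K2_verts k" "(k - 1, 1) \<in> K2_verts k"
    using k unfolding K2_verts_def by auto
  have "k - 1 \<notin> P" unfolding P_def by auto
  then have high: "k - 2 < \<psi> (k - 1, 0)" "k - 2 < \<psi> (k - 1, 1)"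
    using low_part[OF last(1)] low_part[OF last(2)] by fastforce+
  have last_colours: "\<psi> (k - 1, 0) = k - 1" "\<psi> (k - 1, 1) = k"
    using high mem[OF last(1)] mem[OF last(2)] k by (auto simp: critical_lists_def; arith)+
  have "k - 2 \<in> (\<lambda>i. \<psi> (i, 0)) ` P" using low_colours by simp
  then obtain j where j: "j \<in> P" "k - 2 = \<psi> (j, 0)" by (rule imageE)
  have partner: "(j, 1) \<in> K2_verts k" using inP(2)[OF j(1)] .
  have "\<psi> (j, 1) \<in> {..k} - {k - 2}"
    using mem[OF partner] j by (simp add: critical_lists_def P_def)
  moreover have "\<not> \<psi> (j, 1) \<le> k - 2"
  proof
    assume "\<psi> (j, 1) \<le> k - 2"
    with low_part[OF partner] j have "\<psi> (j, 1) = k - 2" by auto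
    with calculation show False by simp
  qed
  ultimately have "\<psi> (j, 1) = k - 1 \<or> \<psi> (j, 1) = k" by auto
  moreover have "j \<noteq> k - 1" using j \<open>k - 1 \<notin> P\<close> by auto
  ultimately show False
    using edge[OF partner last(1)] edge[OF partner last(2)] last_colours by auto
qed

text \<open>Colourings of the vertex-deleted subgraphs: the k - 2 parts other than j and k - 1 are
monochromatic in the distinct colours below k - 2, and the colours k - 2, k - 1, k are shared
between part j (colours a, b) and the last part (colours c, e).\<close>

definition critical_colouring :: "nat \<Rightarrow> nat \<Rightarrow> nat \<Rightarrow> nat \<Rightarrow> nat \<Rightarrow> nat \<Rightarrow> nat \<times> nat \<Rightarrow> nat" where
  "critical_colouring k j a b c e v =
     (if fst v = k - 1 then (if snd v = 0 then c else e)
      else if fst v = j then (if snd v = 0 then a else b)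
      else if fst v < j then fst v else fst v - 1)"

lemma critical_colouring_proper:
  fixes k j a b c e :: nat and x :: "nat \<times> nat"
  defines "\<psi> \<equiv> critical_colouring k j a b c e"
  assumes k: "2 \<le> k" and j: "j < k - 1"
    and special: "\<And>w. w \<in> K2_verts k - {x} \<Longrightarrow> fst w \<in> {j, k - 1} \<Longrightarrow>
                    \<psi> w \<in> critical_lists k w \<and> k - 2 \<le> \<psi> w"
    and distinct: "\<And>u w. u \<in> K2_verts k - {x} \<Longrightarrow> w \<in> K2_verts k - {x} \<Longrightarrow>
                     fst u = j \<Longrightarrow> fst w = k - 1 \<Longrightarrow> \<psi> u \<noteq> \<psi> w"
  shows "proper_L_coloring (K2_verts k - {x}) (\<lambda>u w. K2_edges k u w \<and> u \<noteq> x \<and> w \<noteq> x)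
           (critical_lists k) \<psi>"
proof -
  have ordinary: "\<psi> w = (if fst w < j then fst w else fst w - 1) \<and> \<psi> w < k - 2"
    if "w \<in> K2_verts k" "fst w \<notin> {j, k - 1}" for w
    using that j unfolding \<psi>_def critical_colouring_def K2_verts_def by auto
  have "\<psi> w \<in> critical_lists k w" if "w \<in> K2_verts k - {x}" for w
  proof (cases "fst w \<in> {j, k - 1}")
    case False
    with ordinary[of w] that show ?thesis by (auto simp: critical_lists_def)
  qed (use special that in blast)
  moreover have "\<psi> u \<noteq> \<psi> w"
    if u: "u \<in> K2_verts k - {x}" and w: "w \<in> K2_verts k - {x}" and uw: "fst u \<noteq> fst w" for u w
  proof (cases "fst u \<in> {j, k - 1}"; cases "fst w \<in> {j, k - 1}")
    assume "fst u \<in> {j, k - 1}" "fst w \<in> {j, k - 1}"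
    with uw distinct[OF u w] distinct[OF w u] show ?thesis by auto
  next
    assume "fst u \<in> {j, k - 1}" "fst w \<notin> {j, k - 1}"
    with special[OF u] ordinary[of w] w show ?thesis by auto
  next
    assume "fst u \<notin> {j, k - 1}" "fst w \<in> {j, k - 1}"
    with special[OF w] ordinary[of u] u show ?thesis by auto
  next
    assume "fst u \<notin> {j, k - 1}" "fst w \<notin> {j, k - 1}"
    with ordinary[of u] ordinary[of w] u w uw show ?thesis by auto
  qed
  ultimately show ?thesis
    unfolding proper_L_coloring_def K2_edges_def by blast
qed

lemma critical_lists_vertex_critical:
  assumes k: "2 \<le> k" and x: "x \<in> K2_verts k"
  shows "\<exists>\<psi>. proper_L_coloring (K2_verts k - {x}) (\<lambda>u w. K2_edges k u w \<and> u \<noteq> x \<and> w \<noteq> x)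
               (critical_lists k) \<psi>"
proof -
  obtain i s where xs: "x = (i, s)" "i < k" "s = 0 \<or> s = 1"
    using x unfolding K2_verts_def by auto
  consider "i = k - 1" "s = 0" | "i = k - 1" "s = 1" | "i < k - 1" "s = 0" | "i < k - 1" "s = 1"
    using xs by linarith
  then show ?thesis
  proof cases
    case 1
    show ?thesis
      by (rule exI, rule critical_colouring_proper[where j = 0 and a = "k - 2" and b = "k - 1" and c = "k - 1" and e = k])
         (use k 1 xs in \<open>auto simp: critical_colouring_def critical_lists_def K2_verts_def\<close>)
  next
    case 2
    show ?thesis
      by (rule exI, rule critical_colouring_proper[where j = 0 and a = "k - 2" and b = k and c = "k - 1" and e = k])
         (use k 2 xs in \<open>auto simp: critical_colouring_def critical_lists_def K2_verts_def\<close>)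
  next
    case 3
    show ?thesis
      by (rule exI, rule critical_colouring_proper[where j = i and a = "k - 2" and b = "k - 1" and c = "k - 2" and e = "k - 2"])
         (use k 3 xs in \<open>auto simp: critical_colouring_def critical_lists_def K2_verts_def\<close>)
  next
    case 4
    show ?thesis
      by (rule exI, rule critical_colouring_proper[where j = i and a = "k - 2" and b = k and c = "k - 1" and e = k])
         (use k 4 xs in \<open>auto simp: critical_colouring_def critical_lists_def K2_verts_def\<close>)
  qed
qed

lemma independent_set_within_part:
  assumes "is_subgraph V F (K2_verts k) (K2_edges k)" and "S \<subseteq> W"
    and "\<And>u v. u \<in> S \<Longrightarrow> v \<in> S \<Longrightarrow> fst u = fst v"
  shows "independent_set W F S"
  using assms unfolding independent_set_def is_subgraph_def K2_edges_def by blast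

lemma critical_lists_whole_hall_sum:
  assumes k: "2 \<le> k" and sub: "is_subgraph (K2_verts k) F (K2_verts k) (K2_edges k)"
  shows "card (K2_verts k) \<le>
    (\<Sum>\<sigma>\<in>(\<Union>v\<in>K2_verts k. critical_lists k v). indep_number {v\<in>K2_verts k. \<sigma> \<in> critical_lists k v} F)"
proof -
  have last: "(k - 1, 0) \<in> K2_verts k" "(k - 1, 1) \<in> K2_verts k"
    using k unfolding K2_verts_def by auto
  have "\<sigma> \<in> critical_lists k (k - 1, 0) \<union> critical_lists k (k - 1, 1)" if "\<sigma> \<le> k" for \<sigma>
    using that by (auto simp: critical_lists_def)
  then have colours: "(\<Union>v\<in>K2_verts k. critical_lists k v) = {..k}"
    using last by (auto simp: critical_lists_def split: if_splits)
  define S :: "nat \<Rightarrow> (nat \<times> nat) set" where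
    "S \<sigma> = (if \<sigma> < k - 2 then {(0, 0), (0, 1)} else if \<sigma> = k - 2 then {(k - 1, 0), (k - 1, 1)}
             else if \<sigma> = k - 1 then {(k - 1, 0)} else {(k - 1, 1)})" for \<sigma>
  have indep: "card (S \<sigma>) \<le> indep_number {v\<in>K2_verts k. \<sigma> \<in> critical_lists k v} F" if "\<sigma> \<le> k" for \<sigma>
  proof (rule card_le_indep_number)
    show "independent_set {v\<in>K2_verts k. \<sigma> \<in> critical_lists k v} F (S \<sigma>)"
      by (rule independent_set_within_part[OF sub])
         (use k that in \<open>auto simp: S_def critical_lists_def K2_verts_def split: if_splits\<close>)
  qed (simp add: K2_verts_def)
  have "card (K2_verts k) = 2 * k"
    unfolding K2_verts_def by (simp add: card_cartesian_product)
  also have "\<dots> = (\<Sum>\<sigma>\<le>k. card (S \<sigma>))"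
  proof -
    have "{..k} = {..k - 2} \<union> {k - 1, k}" and "k - 1 \<noteq> k" using k by auto
    moreover have "card (S \<sigma>) = 2" if "\<sigma> \<le> k - 2" for \<sigma>
      using that k by (auto simp: S_def)
    moreover have "card (S (k - 1)) = 1" "card (S k) = 1" using k by (auto simp: S_def)
    ultimately show ?thesis using k by (simp add: sum.union_disjoint)
  qed
  also have "\<dots> \<le> (\<Sum>\<sigma>\<le>k. indep_number {v\<in>K2_verts k. \<sigma> \<in> critical_lists k v} F)"
    using indep by (intro sum_mono) auto
  finally show ?thesis using colours by simp
qed

lemma critical_lists_hall_condition:
  assumes "2 \<le> k"
  shows "hall_condition (K2_verts k) (K2_edges k) (critical_lists k)"
  using assms critical_lists_card(1) critical_lists_vertex_critical critical_lists_whole_hall_sum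
  by (intro hall_condition_if_vertex_critical) (auto simp: K2_verts_def)

lemma hall_good_K2: "hall_good (K2_verts k) (K2_edges k) k"
  unfolding hall_good_def
proof (intro allI impI)
  fix L :: "nat \<times> nat \<Rightarrow> nat set"
  assume "\<forall>v\<in>K2_verts k. finite (L v)" "\<forall>v\<in>K2_verts k. k \<le> card (L v)"
  then have "\<exists>\<psi>. proper_L_coloring ({0..<k} \<times> {0, 1}) (cocktail_edges {0..<k}) L \<psi>"
    by (intro cocktail_party_choosable) (auto simp: K2_verts_def)
  then show "\<exists>\<psi>. proper_L_coloring (K2_verts k) (K2_edges k) L \<psi>"
    by (simp add: K2_edges_eq_cocktail_edges K2_verts_def)
qed

lemma not_hall_good_K2:
  assumes "2 \<le> k" and "y < k"
  shows "\<not> hall_good (K2_verts k) (K2_edges k) y"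
proof
  assume "hall_good (K2_verts k) (K2_edges k) y"
  moreover have "y \<le> k - 1" using assms(2) by simp
  then have "\<forall>v\<in>K2_verts k. y \<le> card (critical_lists k v)"
    using critical_lists_card(2)[OF assms(1)] le_trans by blast
  ultimately obtain \<psi> where "proper_L_coloring (K2_verts k) (K2_edges k) (critical_lists k) \<psi>"
    using assms(1) critical_lists_card(1) critical_lists_hall_condition unfolding hall_good_def by blast
  with critical_lists_not_colourable[OF assms(1)] show False by blast
qed

theorem theorem3:
  fixes k :: nat
  assumes "2 \<le> k"
  shows "hall_number (K2_verts k) (K2_edges k) = k"
  unfolding hall_number_def
proof (rule Least_equality)
  show "0 < k \<and> hall_good (K2_verts k) (K2_edges k) k"
    using assms hall_good_K2 by simp
  show "k \<le> y" if "0 < y \<and> hall_good (K2_verts k) (K2_edges k) y" for y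
    using that not_hall_good_K2[OF assms, of y] by (meson not_le)
qed

end
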